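(* Let $({\cal A},{\cal A}_0)$ be a locally convex quasi *-algebra with identity and topology $\tau$, let $\omega_0$ be a positive linear functional on ${\cal A}_0$ with $\omega_0(a^*a)\le p(a)^2$ for all $a\in{\cal A}_0$ for some $\tau$-continuous seminorm $p$, let $\omega=\tilde\omega_0$ be its continuous extension to ${\cal A}$ with GNS construction $(\pi_\omega,\lambda_\omega,{\cal H}_\omega)$, and for $b\in{\cal A}_0$ let $P_\omega^b$ be the orthogonal projection of ${\cal H}_\omega$ onto ${\cal H}_\omega^b=\overline{\pi_\omega({\cal A}_0)\lambda_\omega(b)}$. Suppose that $\pi_\omega(a)$ is bounded for every $a\in{\cal A}_0$. Then $\pi_\omega({\cal A})'_w$ is a von Neumann algebra and $P_\omega^b\in\pi_\omega({\cal A})'_w$.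
   Context: A locally convex quasi *-algebra $({\cal A},{\cal A}_0)$: ${\cal A}_0$ is a *-algebra with a locally convex topology $\tau$ making the involution and the multiplications $a\mapsto ab$, $a\mapsto ba$ ($b\in{\cal A}_0$) continuous, ${\cal A}$ is the $\tau$-completion with involution and products $ax,xa$ ($a\in{\cal A},x\in{\cal A}_0$) extended by continuity. GNS construction: Hilbert space ${\cal H}_\omega$, linear $\lambda_\omega:{\cal A}\to{\cal H}_\omega$ with ${\cal D}:=\lambda_\omega({\cal A}_0)$ dense, $\langle\lambda_\omega(x),\lambda_\omega(a)\rangle=\omega(a^*x)$, and operators $\pi_\omega(x)$ on ${\cal D}$ given by $\pi_\omega(x)\lambda_\omega(a)=\lambda_\omega(xa)$, with $\pi_\omega(x)^\dagger:=\pi_\omega(x)^*\upharpoonright{\cal D}=\pi_\omega(x^* )$. Weak commutant: ${\mathfrak M}'_w=\{C\in{\cal B}({\cal H}_\omega):\langle X\xi,C^*\eta\rangle=\langle C\xi,X^\dagger\eta\rangle\ \forall X\in{\mathfrak M},\ \xi,\eta\in{\cal D}\}$. *)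

theory Defs
  imports "HOL-Analysis.Analysis"
begin

class scaleC = scaleR +
  fixes scaleC :: "complex \<Rightarrow> 'a \<Rightarrow> 'a" (infixr \<open>*\<^sub>C\<close> 75)
  assumes scaleR_scaleC: "scaleR r = scaleC (complex_of_real r)"

class complex_vector = scaleC + ab_group_add +
  assumes scaleC_add_right: "a *\<^sub>C (x + y) = a *\<^sub>C x + a *\<^sub>C y"
  and scaleC_add_left: "(a + b) *\<^sub>C x = a *\<^sub>C x + b *\<^sub>C x"
  and scaleC_scaleC: "a *\<^sub>C (b *\<^sub>C x) = (a * b) *\<^sub>C x"
  and scaleC_one: "1 *\<^sub>C x = x"

class complex_normed_vector = complex_vector + real_normed_vector +
  assumes norm_scaleC: "norm (a *\<^sub>C x) = cmod a * norm x"

text \<open>Inner product: linear in the first, conjugate-linear in the second argument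
  (the convention of the paper, where \<langle>\<lambda>(x),\<lambda>(a)\<rangle> = \<omega>(a* x)).\<close>
class complex_inner = complex_normed_vector +
  fixes cinner :: "'a \<Rightarrow> 'a \<Rightarrow> complex"
  assumes cinner_add_left: "cinner (x + y) z = cinner x z + cinner y z"
  and cinner_scaleC_left: "cinner (c *\<^sub>C x) y = c * cinner x y"
  and cinner_commute: "cinner y x = cnj (cinner x y)"
  and cinner_nonneg: "0 \<le> Re (cinner x x)"
  and norm_eq_sqrt_cinner: "norm x = sqrt (Re (cinner x x))"

class chilbert_space = complex_inner + complete_space

instantiation complex :: complex_vector
begin
definition scaleC_complex :: "complex \<Rightarrow> complex \<Rightarrow> complex" where
  "scaleC_complex = (*)"
instance by standard (auto simp: scaleC_complex_def scaleR_conv_of_real algebra_simps fun_eq_iff)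
end

definition clinear_on :: "'a::complex_vector set \<Rightarrow> ('a \<Rightarrow> 'b::complex_vector) \<Rightarrow> bool" where
  "clinear_on X f \<longleftrightarrow> (\<forall>x\<in>X. \<forall>y\<in>X. \<forall>c d. c *\<^sub>C x + d *\<^sub>C y \<in> X \<longrightarrow>
       f (c *\<^sub>C x + d *\<^sub>C y) = c *\<^sub>C f x + d *\<^sub>C f y)"

definition bounded_clinear_op :: "('h::complex_normed_vector \<Rightarrow> 'h) \<Rightarrow> bool" where
  "bounded_clinear_op T \<longleftrightarrow> clinear_on UNIV T \<and> (\<exists>K. \<forall>x. norm (T x) \<le> K * norm x)"

definition adj :: "('h::chilbert_space \<Rightarrow> 'h) \<Rightarrow> ('h \<Rightarrow> 'h)" where
  "adj T = (SOME S. bounded_clinear_op S \<and> (\<forall>\<xi> \<eta>. cinner (T \<xi>) \<eta> = cinner \<xi> (S \<eta>)))"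

definition commutant :: "('h::chilbert_space \<Rightarrow> 'h) set \<Rightarrow> ('h \<Rightarrow> 'h) set" where
  "commutant M = {C. bounded_clinear_op C \<and> (\<forall>X\<in>M. C \<circ> X = X \<circ> C)}"

definition von_neumann_algebra :: "('h::chilbert_space \<Rightarrow> 'h) set \<Rightarrow> bool" where
  "von_neumann_algebra M \<longleftrightarrow>
     (\<forall>X\<in>M. bounded_clinear_op X) \<and> id \<in> M \<and>
     (\<forall>X\<in>M. \<forall>Y\<in>M. (\<lambda>\<xi>. X \<xi> + Y \<xi>) \<in> M \<and> X \<circ> Y \<in> M \<and> adj X \<in> M) \<and>
     (\<forall>X\<in>M. \<forall>c. (\<lambda>\<xi>. c *\<^sub>C X \<xi>) \<in> M) \<and>
     commutant (commutant M) = M"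

definition orth_proj :: "'h::chilbert_space set \<Rightarrow> 'h \<Rightarrow> 'h" where
  "orth_proj K = (\<lambda>\<xi>. SOME k. k \<in> K \<and> (\<forall>y\<in>K. cinner (\<xi> - k) y = 0))"

definition seminorm_c :: "('a::complex_vector \<Rightarrow> real) \<Rightarrow> bool" where
  "seminorm_c p \<longleftrightarrow> (\<forall>x y. p (x + y) \<le> p x + p y) \<and> (\<forall>c x. p (c *\<^sub>C x) = cmod c * p x)"

text \<open>The locally convex topology \<tau> is given by a directed family S of seminorms
  (every locally convex topology admits such a family).\<close>
definition lc_continuous :: "('a::complex_vector \<Rightarrow> real) set \<Rightarrow> ('a \<Rightarrow> 'a) \<Rightarrow> bool" where
  "lc_continuous S T \<longleftrightarrow> (\<forall>x. \<forall>p\<in>S. \<forall>\<epsilon>>0. \<exists>q\<in>S. \<exists>\<delta>>0. \<forall>y. q (y - x) < \<delta> \<longrightarrow> p (T y - T x) < \<epsilon>)"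

definition lc_continuous_fun :: "('a::complex_vector \<Rightarrow> real) set \<Rightarrow> ('a \<Rightarrow> 'b::metric_space) \<Rightarrow> bool" where
  "lc_continuous_fun S f \<longleftrightarrow> (\<forall>x. \<forall>\<epsilon>>0. \<exists>q\<in>S. \<exists>\<delta>>0. \<forall>y. q (y - x) < \<delta> \<longrightarrow> dist (f y) (f x) < \<epsilon>)"

definition lc_cauchy_filter :: "('a::complex_vector \<Rightarrow> real) set \<Rightarrow> 'a filter \<Rightarrow> bool" where
  "lc_cauchy_filter S F \<longleftrightarrow> F \<noteq> bot \<and>
     (\<forall>p\<in>S. \<forall>\<epsilon>>0. eventually (\<lambda>(x, y). p (x - y) < \<epsilon>) (F \<times>\<^sub>F F))"

definition lc_converges :: "('a::complex_vector \<Rightarrow> real) set \<Rightarrow> 'a filter \<Rightarrow> 'a \<Rightarrow> bool" where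
  "lc_converges S F a \<longleftrightarrow> (\<forall>p\<in>S. \<forall>\<epsilon>>0. eventually (\<lambda>x. p (x - a) < \<epsilon>) F)"

text \<open>\<open>lcqsa A0 mul star S e\<close>: the (carrier type of) \<A> with the subspace \<A>0, the
  multiplication (meaningful when one factor lies in \<A>0: on \<A>0 \<times> \<A>0 it is the product of
  \<A>0; a x and x a for a \<in> \<A>, x \<in> \<A>0 are the extensions by continuity), the involution,
  the family of seminorms defining \<tau> and the identity e.\<close>
definition lcqsa :: "'a::complex_vector set \<Rightarrow> ('a \<Rightarrow> 'a \<Rightarrow> 'a) \<Rightarrow> ('a \<Rightarrow> 'a)
     \<Rightarrow> ('a \<Rightarrow> real) set \<Rightarrow> 'a \<Rightarrow> bool" where
  "lcqsa A0 mul star S e \<longleftrightarrow>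
     \<comment> \<open>\<tau> is a Hausdorff locally convex topology given by a directed family of seminorms\<close>
     S \<noteq> {} \<and> (\<forall>p\<in>S. seminorm_c p) \<and>
     (\<forall>p\<in>S. \<forall>q\<in>S. \<exists>r\<in>S. \<forall>x. max (p x) (q x) \<le> r x) \<and>
     (\<forall>x. (\<forall>p\<in>S. p x = 0) \<longrightarrow> x = 0) \<and>
     \<comment> \<open>\<A>0 is a *-algebra with identity e\<close>
     0 \<in> A0 \<and> (\<forall>x\<in>A0. \<forall>y\<in>A0. \<forall>c. x + y \<in> A0 \<and> c *\<^sub>C x \<in> A0 \<and> mul x y \<in> A0 \<and> star x \<in> A0) \<and>
     (\<forall>x\<in>A0. \<forall>y\<in>A0. \<forall>z\<in>A0. mul (mul x y) z = mul x (mul y z)) \<and>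
     (\<forall>x\<in>A0. \<forall>y\<in>A0. star (mul x y) = mul (star y) (star x)) \<and>
     e \<in> A0 \<and> (\<forall>a. mul e a = a \<and> mul a e = a) \<and>
     \<comment> \<open>involution on \<A>: conjugate-linear, involutive, continuous\<close>
     (\<forall>a b c d. star (c *\<^sub>C a + d *\<^sub>C b) = cnj c *\<^sub>C star a + cnj d *\<^sub>C star b) \<and>
     (\<forall>a. star (star a) = a) \<and> lc_continuous S star \<and>
     \<comment> \<open>products a x, x a (x \<in> \<A>0): linear in a and continuous in a;
         bilinearity on \<A>0 \<times> \<A>0 follows\<close>
     (\<forall>x\<in>A0. clinear_on UNIV (\<lambda>a. mul a x) \<and> clinear_on UNIV (\<lambda>a. mul x a) \<and>
              lc_continuous S (\<lambda>a. mul a x) \<and> lc_continuous S (\<lambda>a. mul x a)) \<and>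
     (\<forall>x\<in>A0. clinear_on A0 (\<lambda>y. mul x y)) \<and>
     \<comment> \<open>\<A> is the \<tau>-completion of \<A>0: \<A>0 is dense and \<A> is complete\<close>
     (\<forall>a. \<forall>p\<in>S. \<forall>\<epsilon>>0. \<exists>x\<in>A0. p (a - x) < \<epsilon>) \<and>
     (\<forall>F. lc_cauchy_filter S F \<longrightarrow> (\<exists>a. lc_converges S F a))"

text \<open>The operators \<pi>_\<omega>(x) (x \<in> \<A>) on
  D = \<lambda>(\<A>0) are \<pi>_\<omega>(x) \<lambda>(a) = \<lambda>(x a).\<close>
definition gns :: "'a::complex_vector set \<Rightarrow> ('a \<Rightarrow> 'a \<Rightarrow> 'a) \<Rightarrow> ('a \<Rightarrow> 'a) \<Rightarrow> ('a \<Rightarrow> complex)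
     \<Rightarrow> ('a \<Rightarrow> 'h::chilbert_space) \<Rightarrow> bool" where
  "gns A0 mul star \<omega> lam \<longleftrightarrow>
     clinear_on UNIV lam \<and> closure (lam ` A0) = UNIV \<and>
     (\<forall>x\<in>A0. \<forall>a. cinner (lam x) (lam a) = \<omega> (mul (star a) x))"

text \<open>Weak commutant of \<M> = \<pi>_\<omega>(\<A>), with X = \<pi>_\<omega>(x), X-dagger = \<pi>_\<omega>(x*),
  \<xi> = \<lambda>(a), \<eta> = \<lambda>(c) (a, c \<in> \<A>0).\<close>
definition weak_commutant_pi :: "'a::complex_vector set \<Rightarrow> ('a \<Rightarrow> 'a \<Rightarrow> 'a) \<Rightarrow> ('a \<Rightarrow> 'a)
     \<Rightarrow> ('a \<Rightarrow> 'h::chilbert_space) \<Rightarrow> ('h \<Rightarrow> 'h) set" where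
  "weak_commutant_pi A0 mul star lam =
     {C. bounded_clinear_op C \<and>
         (\<forall>x. \<forall>a\<in>A0. \<forall>c\<in>A0.
            cinner (lam (mul x a)) (adj C (lam c)) = cinner (C (lam a)) (lam (mul (star x) c)))}"

end

theory Submission
  imports Defs
begin

(* Each pi(x), x in A0, is bounded on the dense domain lam(A0) and therefore extends to a
   bounded operator T_x on H whose adjoint is T_{x*}. The weak commutant of pi(A) is then the
   ordinary commutant of the self-adjoint family {T_x : x in A0}: for x in A0 the defining
   identity of the weak commutant is C T_x = T_x C tested on lam(A0), and it extends to all
   x in A because both of its sides are tau-continuous in x, a consequence of
   norm (lam a) <= p a. The commutant of a self-adjoint family of bounded operators is a von
   Neumann algebra, and the projection onto a closed subspace invariant under such a family
   lies in its commutant; H^b is invariant because T_x lam(y b) = lam((x y) b). *)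

section \<open>Complex inner product spaces\<close>

interpretation cvs: module "scaleC :: complex \<Rightarrow> 'a::complex_vector \<Rightarrow> 'a"
  by standard (auto simp: scaleC_add_right scaleC_add_left scaleC_scaleC scaleC_one)

lemma scaleC_minus1_left: "(-1) *\<^sub>C (x::'a::complex_vector) = - x"
  by (metis cvs.scale_minus_left scaleC_one)

lemma cinner_add_right: "cinner (x::'h::complex_inner) (y + z) = cinner x y + cinner x z"
  by (metis cinner_add_left cinner_commute complex_cnj_add)

lemma cinner_scaleC_right: "cinner (x::'h::complex_inner) (c *\<^sub>C y) = cnj c * cinner x y"
  by (metis cinner_scaleC_left cinner_commute complex_cnj_mult)

lemma cinner_zero_left [simp]: "cinner (0::'h::complex_inner) y = 0"
  using cinner_add_left[of "0::'h" 0 y] by simp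

lemma cinner_zero_right [simp]: "cinner (x::'h::complex_inner) 0 = 0"
  using cinner_add_right[of x "0::'h" 0] by simp

lemma cinner_diff_left: "cinner (x - y::'h::complex_inner) z = cinner x z - cinner y z"
  by (metis cinner_add_left diff_add_cancel add_diff_cancel_right')

lemma cinner_diff_right: "cinner (x::'h::complex_inner) (y - z) = cinner x y - cinner x z"
  by (metis cinner_add_right diff_add_cancel add_diff_cancel_right')

lemma power2_norm_eq_cinner: "(norm (x::'h::complex_inner))\<^sup>2 = Re (cinner x x)"
  by (simp add: norm_eq_sqrt_cinner cinner_nonneg)

lemma cinner_self_eq_norm: "cinner (x::'h::complex_inner) x = of_real ((norm x)\<^sup>2)"
proof (rule complex_eqI)
  show "Im (cinner x x) = Im (of_real ((norm x)\<^sup>2))"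
    using arg_cong[OF cinner_commute[of x x], of Im] by simp
qed (simp add: power2_norm_eq_cinner)

lemma cinner_self_eq_zero_iff [simp]: "cinner (x::'h::complex_inner) x = 0 \<longleftrightarrow> x = 0"
  by (simp add: cinner_self_eq_norm)

lemma cinner_ext_left: "(\<And>z. cinner (x::'h::complex_inner) z = cinner y z) \<Longrightarrow> x = y"
  by (metis cinner_diff_left cinner_self_eq_zero_iff eq_iff_diff_eq_0)

lemma cinner_ext_right: "(\<And>z. cinner z (x::'h::complex_inner) = cinner z y) \<Longrightarrow> x = y"
  by (metis cinner_diff_right cinner_self_eq_zero_iff eq_iff_diff_eq_0)

lemma power2_norm_diff_projection:
  fixes x y :: "'h::complex_inner"
  assumes "y \<noteq> 0"
  shows "(norm (x - (cinner x y / of_real ((norm y)\<^sup>2)) *\<^sub>C y))\<^sup>2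
           = (norm x)\<^sup>2 - (cmod (cinner x y))\<^sup>2 / (norm y)\<^sup>2"
proof -
  define n where "n = (norm y)\<^sup>2"
  define z where "z = cinner x y"
  define t where "t = z / of_real n"
  have n: "of_real n \<noteq> (0::complex)" using assms by (simp add: n_def)
  have yy: "cinner y y = of_real n" by (simp add: cinner_self_eq_norm n_def)
  have yx: "cinner y x = cnj z" by (simp add: z_def cinner_commute[of y x])
  have "cinner (x - t *\<^sub>C y) (x - t *\<^sub>C y)
          = cinner x x - cnj t * cinner x y - t * cinner y x + t * cnj t * cinner y y"
    by (simp add: cinner_diff_left cinner_diff_right cinner_scaleC_left cinner_scaleC_right
        algebra_simps)
  also have "\<dots> = of_real ((norm x)\<^sup>2) - z * cnj z / of_real n"
    unfolding yy yx cinner_self_eq_norm[of x] z_def[symmetric] using n by (simp add: t_def field_simps)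
  also have "z * cnj z / of_real n = of_real ((cmod z)\<^sup>2 / n)"
    by (simp add: complex_norm_square[symmetric])
  finally have "Re (cinner (x - t *\<^sub>C y) (x - t *\<^sub>C y)) = (norm x)\<^sup>2 - (cmod z)\<^sup>2 / n"
    by (simp only: of_real_diff[symmetric] Re_complex_of_real)
  then show ?thesis unfolding power2_norm_eq_cinner t_def z_def n_def .
qed

lemma cinner_cauchy_schwarz: "cmod (cinner (x::'h::complex_inner) y) \<le> norm x * norm y"
proof (cases "y = 0")
  case False
  have "0 \<le> (norm x)\<^sup>2 - (cmod (cinner x y))\<^sup>2 / (norm y)\<^sup>2"
    by (metis power2_norm_diff_projection[OF False] zero_le_power2)
  then have "(cmod (cinner x y))\<^sup>2 \<le> (norm x * norm y)\<^sup>2"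
    using False by (simp add: field_simps power_mult_distrib)
  then show ?thesis by (rule power2_le_imp_le) simp
qed simp

lemma parallelogram_law:
  "(norm ((a::'h::complex_inner) + b))\<^sup>2 + (norm (a - b))\<^sup>2 = 2 * (norm a)\<^sup>2 + 2 * (norm b)\<^sup>2"
  by (simp add: power2_norm_eq_cinner cinner_add_left cinner_add_right cinner_diff_left
      cinner_diff_right)

lemma bounded_bilinear_cinner: "bounded_bilinear (cinner :: 'h::complex_inner \<Rightarrow> 'h \<Rightarrow> complex)"
proof
  show "\<exists>K. \<forall>a b::'h. norm (cinner a b) \<le> norm a * norm b * K"
    by (intro exI[of _ 1]) (simp add: cinner_cauchy_schwarz)
qed (simp_all add: cinner_add_left cinner_add_right scaleR_scaleC cinner_scaleC_left
    cinner_scaleC_right scaleC_complex_def)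

lemmas continuous_on_cinner [continuous_intros] =
  bounded_bilinear.continuous_on[OF bounded_bilinear_cinner]
lemmas continuous_cinner [continuous_intros] =
  bounded_bilinear.continuous[OF bounded_bilinear_cinner]

lemma bounded_linear_scaleC: "bounded_linear (\<lambda>x. c *\<^sub>C (x::'h::complex_normed_vector))"
proof (rule bounded_linear_intro[where K="cmod c"])
  show "c *\<^sub>C (r *\<^sub>R x) = r *\<^sub>R (c *\<^sub>C x)" for r and x :: 'h
    unfolding scaleR_scaleC scaleC_scaleC by (simp add: mult.commute)
qed (simp_all add: scaleC_add_right norm_scaleC mult.commute)

lemmas continuous_on_scaleC [continuous_intros] =
  bounded_linear.continuous_on[OF bounded_linear_scaleC]
lemmas tendsto_scaleC [tendsto_intros] =
  bounded_linear.tendsto[OF bounded_linear_scaleC]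

section \<open>Closed subspaces and orthogonal projections\<close>

definition csubspace :: "'h::complex_vector set \<Rightarrow> bool" where
  "csubspace V \<longleftrightarrow> 0 \<in> V \<and> (\<forall>x\<in>V. \<forall>y\<in>V. x + y \<in> V) \<and> (\<forall>x\<in>V. \<forall>c. c *\<^sub>C x \<in> V)"

lemma csubspace_diff: "csubspace V \<Longrightarrow> x \<in> V \<Longrightarrow> y \<in> V \<Longrightarrow> x - y \<in> V"
  unfolding csubspace_def by (metis diff_conv_add_uminus scaleC_minus1_left)

lemma csubspace_closure:
  assumes "csubspace (V::'h::complex_normed_vector set)"
  shows "csubspace (closure V)"
  unfolding csubspace_def
proof (intro conjI ballI allI)
  show "0 \<in> closure V" using assms closure_subset unfolding csubspace_def by blast
next
  fix x y assume "x \<in> closure V" "y \<in> closure V"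
  then obtain a b where "\<forall>n. a n \<in> V" "a \<longlonglongrightarrow> x" "\<forall>n. b n \<in> V" "b \<longlonglongrightarrow> y"
    unfolding closure_sequential by blast
  with assms show "x + y \<in> closure V"
    unfolding closure_sequential csubspace_def
    by (intro exI[of _ "\<lambda>n. a n + b n"]) (auto intro: tendsto_intros)
next
  fix x c assume "x \<in> closure V"
  then obtain a where "\<forall>n. a n \<in> V" "a \<longlonglongrightarrow> x"
    unfolding closure_sequential by blast
  with assms show "c *\<^sub>C x \<in> closure V"
    unfolding closure_sequential csubspace_def
    by (intro exI[of _ "\<lambda>n. c *\<^sub>C a n"]) (auto intro: tendsto_intros)
qed

lemma csubspace_minimizing_sequence_Cauchy:
  fixes K :: "'h::complex_inner set"
  assumes K: "csubspace K" and lower: "\<And>k. k \<in> K \<Longrightarrow> d \<le> (norm (\<xi> - k))\<^sup>2"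
    and s: "\<And>n. s n \<in> K" "\<And>n. (norm (\<xi> - s n))\<^sup>2 < d + inverse (real (Suc n))"
  shows "Cauchy s"
proof -
  \<comment> \<open>parallelogram law at the midpoint of s m and s n, which lies in K\<close>
  have close: "(norm (s m - s n))\<^sup>2 \<le> 2 * inverse (real (Suc m)) + 2 * inverse (real (Suc n))"
    for m n
  proof -
    define mid where "mid = of_real (1/2) *\<^sub>C (s m + s n)"
    have "mid \<in> K" using K s unfolding mid_def csubspace_def by blast
    have "(\<xi> - s m) + (\<xi> - s n) = 2 *\<^sub>R (\<xi> - mid)"
      by (simp add: mid_def scaleR_scaleC cvs.scale_right_diff_distrib scaleC_add_right scaleC_scaleC
          scaleC_one flip: of_real_mult)
         (metis one_add_one scaleC_add_left scaleC_one)
    then have "(norm ((\<xi> - s m) + (\<xi> - s n)))\<^sup>2 = 4 * (norm (\<xi> - mid))\<^sup>2"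
      by (simp add: power_mult_distrib)
    then have "4 * (norm (\<xi> - mid))\<^sup>2 + (norm (s m - s n))\<^sup>2
                 = 2 * (norm (\<xi> - s m))\<^sup>2 + 2 * (norm (\<xi> - s n))\<^sup>2"
      using parallelogram_law[of "\<xi> - s m" "\<xi> - s n"] by (simp add: norm_minus_commute)
    then show ?thesis using lower[OF \<open>mid \<in> K\<close>] s(2)[of m] s(2)[of n] by linarith
  qed
  show "Cauchy s"
  proof (rule metric_CauchyI)
    fix e :: real assume "e > 0"
    obtain N where N: "inverse (real (Suc N)) < e\<^sup>2 / 4"
      using reals_Archimedean[of "e\<^sup>2 / 4"] \<open>e > 0\<close> by auto
    have "dist (s m) (s n) < e" if "N \<le> m" "N \<le> n" for m n
    proof -
      have "inverse (real (Suc m)) \<le> inverse (real (Suc N))"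
        "inverse (real (Suc n)) \<le> inverse (real (Suc N))"
        using that by (simp_all add: field_simps)
      then have "(norm (s m - s n))\<^sup>2 < e\<^sup>2" using close[of m n] N by linarith
      then show ?thesis using \<open>e > 0\<close> by (simp add: dist_norm power_less_imp_less_base)
    qed
    then show "\<exists>M. \<forall>m\<ge>M. \<forall>n\<ge>M. dist (s m) (s n) < e" by blast
  qed
qed

lemma closest_point_in_closed_csubspace:
  fixes K :: "'h::chilbert_space set"
  assumes K: "csubspace K" "closed K"
  obtains k where "k \<in> K" "\<And>y. y \<in> K \<Longrightarrow> norm (\<xi> - k) \<le> norm (\<xi> - y)"
proof -
  define f where "f k = (norm (\<xi> - k))\<^sup>2" for k
  define d where "d = Inf (f ` K)"
  have "0 \<in> K" using K unfolding csubspace_def by blast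
  have d_le: "d \<le> f k" if "k \<in> K" for k
    unfolding d_def f_def using that by (intro cInf_lower) (auto intro: bdd_belowI[where m=0])
  have "\<exists>k\<in>K. f k < d + inverse (real (Suc n))" for n
    using cInf_lessD[of "f ` K" "d + inverse (real (Suc n))"] \<open>0 \<in> K\<close> unfolding d_def by auto
  then obtain s where s: "\<And>n. s n \<in> K" "\<And>n. f (s n) < d + inverse (real (Suc n))"
    by metis
  have "Cauchy s"
    using csubspace_minimizing_sequence_Cauchy[OF K(1)] d_le s unfolding f_def by blast
  then obtain k where k: "s \<longlonglongrightarrow> k" using Cauchy_convergent_iff convergent_def by blast
  have "k \<in> K" using closed_sequentially[OF K(2) s(1) k] .
  have "f k \<le> d"
  proof (rule LIMSEQ_le)
    show "(\<lambda>n. f (s n)) \<longlonglongrightarrow> f k" unfolding f_def by (intro tendsto_intros k)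
    show "(\<lambda>n. d + inverse (real (Suc n))) \<longlonglongrightarrow> d"
      using tendsto_add[OF tendsto_const LIMSEQ_inverse_real_of_nat] by simp
  qed (use s(2) less_imp_le in blast)
  then have "norm (\<xi> - k) \<le> norm (\<xi> - y)" if "y \<in> K" for y
    using d_le[OF that] by (simp add: f_def power2_le_imp_le)
  with \<open>k \<in> K\<close> show ?thesis using that by blast
qed

lemma closest_point_orthogonal:
  fixes K :: "'h::complex_inner set"
  assumes "csubspace K" "k \<in> K" "y \<in> K"
    and closest: "\<And>y. y \<in> K \<Longrightarrow> norm (\<xi> - k) \<le> norm (\<xi> - y)"
  shows "cinner (\<xi> - k) y = 0"
proof (cases "y = 0")
  case False
  define t where "t = cinner (\<xi> - k) y / of_real ((norm y)\<^sup>2)"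
  have "k + t *\<^sub>C y \<in> K" using assms unfolding csubspace_def by blast
  then have "(norm (\<xi> - k))\<^sup>2 \<le> (norm (\<xi> - k - t *\<^sub>C y))\<^sup>2"
    using closest by (simp add: diff_diff_eq power_mono)
  also have "\<dots> = (norm (\<xi> - k))\<^sup>2 - (cmod (cinner (\<xi> - k) y))\<^sup>2 / (norm y)\<^sup>2"
    unfolding t_def by (rule power2_norm_diff_projection[OF False])
  finally have "(cmod (cinner (\<xi> - k) y))\<^sup>2 \<le> 0"
    using False by (simp add: divide_le_0_iff)
  then show ?thesis by simp
qed simp

lemma orthogonal_projection_exists:
  fixes K :: "'h::chilbert_space set"
  assumes "csubspace K" "closed K"
  shows "\<exists>k\<in>K. \<forall>y\<in>K. cinner (\<xi> - k) y = 0"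
  by (metis closest_point_in_closed_csubspace closest_point_orthogonal assms)

lemma orthogonal_projection_unique:
  fixes K :: "'h::complex_inner set"
  assumes "csubspace K" "k \<in> K" "\<forall>y\<in>K. cinner (\<xi> - k) y = 0"
    "k' \<in> K" "\<forall>y\<in>K. cinner (\<xi> - k') y = 0"
  shows "k = k'"
proof -
  have "k' - k \<in> K" using csubspace_diff assms by blast
  then have "cinner (k' - k) (k' - k) = 0"
    using assms by (metis cinner_diff_left diff_diff_cancel diff_self right_minus_eq)
  then show ?thesis by simp
qed

lemma orth_proj_in:
  fixes K :: "'h::chilbert_space set"
  assumes "csubspace K" "closed K"
  shows "orth_proj K \<xi> \<in> K" "\<forall>y\<in>K. cinner (\<xi> - orth_proj K \<xi>) y = 0"
  using someI_ex[OF orthogonal_projection_exists[OF assms, of \<xi>, unfolded Bex_def]]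
  unfolding orth_proj_def by auto

lemma orth_proj_eqI:
  fixes K :: "'h::chilbert_space set"
  assumes "csubspace K" "closed K" "k \<in> K" "\<forall>y\<in>K. cinner (\<xi> - k) y = 0"
  shows "orth_proj K \<xi> = k"
  using orthogonal_projection_unique[OF assms(1) orth_proj_in[OF assms(1,2)] assms(3,4)] .

section \<open>Bounded operators and adjoints\<close>

lemma clinear_onD:
  "clinear_on UNIV f \<Longrightarrow> f (c *\<^sub>C x + d *\<^sub>C y) = c *\<^sub>C f x + d *\<^sub>C f y"
  unfolding clinear_on_def by blast

lemma clinear_on_add:
  "clinear_on UNIV (f::'a::complex_vector \<Rightarrow> 'b::complex_vector) \<Longrightarrow> f (x + y) = f x + f y"
  using clinear_onD[of f 1 x 1 y] by (simp add: scaleC_one)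

lemma clinear_on_scaleC:
  "clinear_on UNIV (f::'a::complex_vector \<Rightarrow> 'b::complex_vector) \<Longrightarrow> f (c *\<^sub>C x) = c *\<^sub>C f x"
  using clinear_onD[of f c x 0 x] by simp

lemma clinear_on_zero:
  "clinear_on UNIV (f::'a::complex_vector \<Rightarrow> 'b::complex_vector) \<Longrightarrow> f 0 = 0"
  using clinear_on_scaleC[of f 0 0] by simp

lemma clinear_on_diff:
  "clinear_on UNIV (f::'a::complex_vector \<Rightarrow> 'b::complex_vector) \<Longrightarrow> f (x - y) = f x - f y"
  using clinear_onD[of f 1 x "-1" y] by (simp add: scaleC_one scaleC_minus1_left)

lemma bounded_clinear_op_clinear_on: "bounded_clinear_op T \<Longrightarrow> clinear_on UNIV T"
  unfolding bounded_clinear_op_def by blast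

lemmas bounded_clinear_op_add = clinear_on_add[OF bounded_clinear_op_clinear_on]
lemmas bounded_clinear_op_scaleC = clinear_on_scaleC[OF bounded_clinear_op_clinear_on]
lemmas bounded_clinear_op_diff = clinear_on_diff[OF bounded_clinear_op_clinear_on]

lemma bounded_clinear_op_bound:
  assumes "bounded_clinear_op T"
  obtains K where "K \<ge> 0" "\<And>x. norm (T x) \<le> K * norm x"
proof -
  obtain K where "\<And>x. norm (T x) \<le> K * norm x"
    using assms unfolding bounded_clinear_op_def by blast
  then have "norm (T x) \<le> max K 0 * norm x" for x
    by (metis max.cobounded1 mult_right_mono norm_ge_zero order_trans)
  then show ?thesis using that[of "max K 0"] by simp
qed

lemma bounded_clinear_op_bounded_linear:
  "bounded_clinear_op (T::'h::complex_normed_vector \<Rightarrow> 'h) \<Longrightarrow> bounded_linear T"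
proof -
  assume T: "bounded_clinear_op T"
  then obtain K where "\<And>x. norm (T x) \<le> K * norm x" using bounded_clinear_op_bound by blast
  then show ?thesis
    by (intro bounded_linear_intro[where K=K])
       (simp_all add: bounded_clinear_op_add[OF T] scaleR_scaleC bounded_clinear_op_scaleC[OF T]
         mult.commute)
qed

lemma continuous_on_bounded_clinear_op [continuous_intros]:
  "bounded_clinear_op T \<Longrightarrow> continuous_on S f \<Longrightarrow> continuous_on S (\<lambda>x. T (f x))"
  by (rule bounded_linear.continuous_on[OF bounded_clinear_op_bounded_linear])

lemma bounded_clinear_op_id: "bounded_clinear_op id"
  unfolding bounded_clinear_op_def clinear_on_def by (auto intro: exI[of _ 1])

lemma bounded_clinear_op_comp:
  assumes X: "bounded_clinear_op X" and Y: "bounded_clinear_op Y"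
  shows "bounded_clinear_op (X \<circ> Y)"
proof -
  obtain K where K: "K \<ge> 0" "\<And>x. norm (X x) \<le> K * norm x" using bounded_clinear_op_bound[OF X] by blast
  obtain L where L: "\<And>x. norm (Y x) \<le> L * norm x" using bounded_clinear_op_bound[OF Y] by blast
  have "norm (X (Y x)) \<le> (K * L) * norm x" for x
    using K(2)[of "Y x"] mult_left_mono[OF L[of x] K(1)] by (simp add: mult.assoc)
  moreover have "clinear_on UNIV (X \<circ> Y)"
    by (simp add: clinear_on_def clinear_onD[OF bounded_clinear_op_clinear_on[OF X]]
        clinear_onD[OF bounded_clinear_op_clinear_on[OF Y]])
  ultimately show ?thesis unfolding bounded_clinear_op_def by auto
qed

lemma bounded_clinear_op_plus:
  assumes X: "bounded_clinear_op X" and Y: "bounded_clinear_op Y"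
  shows "bounded_clinear_op (\<lambda>\<xi>. X \<xi> + Y \<xi>)"
proof -
  obtain K where K: "\<And>x. norm (X x) \<le> K * norm x" using bounded_clinear_op_bound[OF X] by blast
  obtain L where L: "\<And>x. norm (Y x) \<le> L * norm x" using bounded_clinear_op_bound[OF Y] by blast
  have "norm (X x + Y x) \<le> (K + L) * norm x" for x
    using norm_triangle_ineq[of "X x" "Y x"] K[of x] L[of x] by (simp add: algebra_simps)
  moreover have "clinear_on UNIV (\<lambda>\<xi>. X \<xi> + Y \<xi>)"
    by (simp add: clinear_on_def clinear_onD[OF bounded_clinear_op_clinear_on[OF X]]
        clinear_onD[OF bounded_clinear_op_clinear_on[OF Y]] scaleC_add_right add_ac)
  ultimately show ?thesis unfolding bounded_clinear_op_def by blast
qed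

lemma bounded_clinear_op_scaleC_left:
  assumes X: "bounded_clinear_op X"
  shows "bounded_clinear_op (\<lambda>\<xi>. c *\<^sub>C X \<xi>)"
proof -
  obtain K where K: "K \<ge> 0" "\<And>x. norm (X x) \<le> K * norm x" using bounded_clinear_op_bound[OF X] by blast
  have "norm (c *\<^sub>C X x) \<le> (cmod c * K) * norm x" for x
    using K(2)[of x] by (simp add: norm_scaleC mult.assoc mult_left_mono)
  moreover have "clinear_on UNIV (\<lambda>\<xi>. c *\<^sub>C X \<xi>)"
    by (simp add: clinear_on_def clinear_onD[OF bounded_clinear_op_clinear_on[OF X]]
        scaleC_add_right scaleC_scaleC mult.commute)
  ultimately show ?thesis unfolding bounded_clinear_op_def by blast
qed

lemma riesz_representation:
  fixes f :: "'h::chilbert_space \<Rightarrow> complex"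
  assumes add: "\<And>x y. f (x + y) = f x + f y" and scale: "\<And>c x. f (c *\<^sub>C x) = c * f x"
    and bound: "\<And>x. cmod (f x) \<le> M * norm x"
  shows "\<exists>y. \<forall>x. f x = cinner x y"
proof (cases "\<forall>x. f x = 0")
  case False
  then obtain u where u: "f u \<noteq> 0" by blast
  have f_diff: "f (x - y) = f x - f y" for x y
    using add[of "x - y" y] by simp
  define Z where "Z = {x. f x = 0}"
  have "csubspace Z"
    unfolding csubspace_def Z_def using scale[of 0 0] by (auto simp: add scale)
  have "bounded_linear f"
    using bound by (intro bounded_linear_intro[where K=M])
      (simp_all add: add scaleR_scaleC scale scaleC_complex_def mult.commute)
  then have "closed Z"
    unfolding Z_def by (intro closed_Collect_eq) (auto intro: linear_continuous_on)
  then obtain p where p: "p \<in> Z" "\<forall>w\<in>Z. cinner (u - p) w = 0"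
    using orthogonal_projection_exists[OF \<open>csubspace Z\<close>] by blast
  define z where "z = u - p"
  have fz: "f z = f u" using p(1) unfolding z_def Z_def by (simp add: f_diff)
  have zz: "cinner z z \<noteq> 0" using fz u scale[of 0 0] by auto
  \<comment> \<open>z is orthogonal to the kernel, and x - (f x / f z) z lies in the kernel\<close>
  have rel: "cinner x z = (f x / f z) * cinner z z" for x
  proof -
    define w where "w = x - (f x / f z) *\<^sub>C z"
    have "f w = 0" unfolding w_def f_diff scale using fz u by simp
    then have "cinner w z = 0"
      using p(2) cinner_commute[of w z] unfolding Z_def z_def by simp
    then show ?thesis unfolding w_def cinner_diff_left cinner_scaleC_left by simp
  qed
  have "f x = cinner x ((cnj (f z) / cnj (cinner z z)) *\<^sub>C z)" for x
    unfolding cinner_scaleC_right rel[of x] using zz fz u by simp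
  then show ?thesis by blast
qed (auto intro: exI[of _ 0])

lemma adj_exists:
  fixes T :: "'h::chilbert_space \<Rightarrow> 'h"
  assumes T: "bounded_clinear_op T"
  shows "\<exists>S. bounded_clinear_op S \<and> (\<forall>\<xi> \<eta>. cinner (T \<xi>) \<eta> = cinner \<xi> (S \<eta>))"
proof -
  obtain K where K: "K \<ge> 0" "\<And>x. norm (T x) \<le> K * norm x" using bounded_clinear_op_bound[OF T] by blast
  have "\<exists>y. \<forall>\<xi>. cinner (T \<xi>) \<eta> = cinner \<xi> y" for \<eta>
  proof (rule riesz_representation[where M="K * norm \<eta>"])
    show "cmod (cinner (T x) \<eta>) \<le> K * norm \<eta> * norm x" for x
      using cinner_cauchy_schwarz[of "T x" \<eta>] mult_right_mono[OF K(2)[of x], of "norm \<eta>"]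
      by (simp add: mult_ac)
  qed (simp_all add: bounded_clinear_op_add[OF T] bounded_clinear_op_scaleC[OF T]
      cinner_add_left cinner_scaleC_left)
  then obtain S where S: "\<And>\<xi> \<eta>. cinner (T \<xi>) \<eta> = cinner \<xi> (S \<eta>)" by metis
  have lin: "S (c *\<^sub>C x + d *\<^sub>C y) = c *\<^sub>C S x + d *\<^sub>C S y" for c d x y
    by (rule cinner_ext_right)
       (simp only: S[symmetric] cinner_add_right cinner_scaleC_right)
  have "norm (S \<eta>) \<le> K * norm \<eta>" for \<eta>
  proof -
    have "(norm (S \<eta>))\<^sup>2 = Re (cinner (T (S \<eta>)) \<eta>)" by (simp add: power2_norm_eq_cinner S)
    also have "\<dots> \<le> norm (T (S \<eta>)) * norm \<eta>"
      by (rule order_trans[OF complex_Re_le_cmod cinner_cauchy_schwarz])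
    also have "\<dots> \<le> K * norm (S \<eta>) * norm \<eta>" using K by (simp add: mult_right_mono)
    finally have "norm (S \<eta>) * norm (S \<eta>) \<le> (K * norm \<eta>) * norm (S \<eta>)"
      by (simp add: power2_eq_square mult_ac)
    then show ?thesis using K(1) by (cases "S \<eta> = 0") simp_all
  qed
  then show ?thesis unfolding bounded_clinear_op_def clinear_on_def using lin S by blast
qed

lemma
  fixes T :: "'h::chilbert_space \<Rightarrow> 'h"
  assumes "bounded_clinear_op T"
  shows bounded_clinear_op_adj: "bounded_clinear_op (adj T)"
    and cinner_adj_right: "cinner (T \<xi>) \<eta> = cinner \<xi> (adj T \<eta>)"
proof -
  have "bounded_clinear_op (adj T) \<and> (\<forall>\<xi> \<eta>. cinner (T \<xi>) \<eta> = cinner \<xi> (adj T \<eta>))"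
    unfolding adj_def by (rule someI_ex[OF adj_exists[OF assms]])
  then show "bounded_clinear_op (adj T)" "cinner (T \<xi>) \<eta> = cinner \<xi> (adj T \<eta>)" by blast+
qed

lemma cinner_adj_left:
  fixes T :: "'h::chilbert_space \<Rightarrow> 'h"
  assumes "bounded_clinear_op T"
  shows "cinner (adj T \<xi>) \<eta> = cinner \<xi> (T \<eta>)"
proof -
  have "cinner (adj T \<xi>) \<eta> = cnj (cinner \<eta> (adj T \<xi>))" by (rule cinner_commute)
  also have "\<dots> = cnj (cinner (T \<eta>) \<xi>)" by (simp add: cinner_adj_right[OF assms])
  finally show ?thesis by (simp add: cinner_commute[of \<xi>])
qed

lemma adj_eqI:
  fixes T :: "'h::chilbert_space \<Rightarrow> 'h"
  assumes "bounded_clinear_op T" "\<And>\<xi> \<eta>. cinner (T \<xi>) \<eta> = cinner \<xi> (S \<eta>)"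
  shows "adj T = S"
  using assms by (intro ext cinner_ext_right) (simp add: cinner_adj_right[symmetric])

lemma bounded_clinear_op_orth_proj:
  fixes K :: "'h::chilbert_space set"
  assumes K: "csubspace K" "closed K"
  shows "bounded_clinear_op (orth_proj K)"
proof -
  let ?P = "orth_proj K"
  have lin: "?P (c *\<^sub>C x + d *\<^sub>C y) = c *\<^sub>C ?P x + d *\<^sub>C ?P y" for c d x y
  proof (rule orth_proj_eqI[OF K])
    show "c *\<^sub>C ?P x + d *\<^sub>C ?P y \<in> K"
      using K orth_proj_in(1)[OF K] unfolding csubspace_def by blast
    have "c *\<^sub>C x + d *\<^sub>C y - (c *\<^sub>C ?P x + d *\<^sub>C ?P y) = c *\<^sub>C (x - ?P x) + d *\<^sub>C (y - ?P y)"
      by (simp add: cvs.scale_right_diff_distrib algebra_simps)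
    then show "\<forall>z\<in>K. cinner (c *\<^sub>C x + d *\<^sub>C y - (c *\<^sub>C ?P x + d *\<^sub>C ?P y)) z = 0"
      using orth_proj_in(2)[OF K, of x] orth_proj_in(2)[OF K, of y]
      by (simp add: cinner_add_left cinner_scaleC_left)
  qed
  have "norm (?P x) \<le> 1 * norm x" for x
  proof -
    have "cinner (?P x) (?P x) = cinner x (?P x)"
      using orth_proj_in[OF K, of x] by (simp add: cinner_diff_left)
    then have "norm (?P x) * norm (?P x) = Re (cinner x (?P x))"
      by (simp flip: power2_eq_square add: power2_norm_eq_cinner)
    also have "\<dots> \<le> norm x * norm (?P x)"
      by (rule order_trans[OF complex_Re_le_cmod cinner_cauchy_schwarz])
    finally show ?thesis by (cases "?P x = 0") simp_all
  qed
  then show ?thesis unfolding bounded_clinear_op_def clinear_on_def using lin by blast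
qed

lemma eq_on_dense:
  fixes f g :: "'a::topological_space \<Rightarrow> 'b::t2_space"
  assumes "closure D = UNIV" "continuous_on UNIV f" "continuous_on UNIV g"
    and "\<And>x. x \<in> D \<Longrightarrow> f x = g x"
  shows "f x = g x"
proof -
  have "closure D \<subseteq> {x. f x = g x}"
    using assms by (intro closure_minimal) (auto intro: closed_Collect_eq)
  then show ?thesis using assms(1) by auto
qed

lemma le_on_dense:
  fixes f g :: "'a::topological_space \<Rightarrow> real"
  assumes "closure D = UNIV" "continuous_on UNIV f" "continuous_on UNIV g"
    and "\<And>x. x \<in> D \<Longrightarrow> f x \<le> g x"
  shows "f x \<le> g x"
proof -
  have "closure D \<subseteq> {x. f x \<le> g x}"
    using assms by (intro closure_minimal) (auto intro: closed_Collect_le)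
  then show ?thesis using assms(1) by auto
qed

lemma eq_on_dense2:
  fixes f g :: "'a::topological_space \<Rightarrow> 'a \<Rightarrow> 'b::t2_space"
  assumes "closure D = UNIV"
    and "continuous_on UNIV (\<lambda>z. f (fst z) (snd z))" "continuous_on UNIV (\<lambda>z. g (fst z) (snd z))"
    and "\<And>x y. x \<in> D \<Longrightarrow> y \<in> D \<Longrightarrow> f x y = g x y"
  shows "f x y = g x y"
  using eq_on_dense[of "D \<times> D" "\<lambda>z. f (fst z) (snd z)" "\<lambda>z. g (fst z) (snd z)" "(x, y)"] assms
  by (auto simp: closure_Times)

lemma bounded_clinear_op_eqI_dense:
  fixes U V :: "'h::chilbert_space \<Rightarrow> 'h"
  assumes "closure D = UNIV" "bounded_clinear_op U" "bounded_clinear_op V"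
    and "\<And>\<xi> \<eta>. \<xi> \<in> D \<Longrightarrow> \<eta> \<in> D \<Longrightarrow> cinner (U \<xi>) \<eta> = cinner (V \<xi>) \<eta>"
  shows "U = V"
proof (intro ext cinner_ext_left)
  show "cinner (U \<xi>) \<eta> = cinner (V \<xi>) \<eta>" for \<xi> \<eta>
    by (rule eq_on_dense2[OF assms(1), where f="\<lambda>\<xi> \<eta>. cinner (U \<xi>) \<eta>" and g="\<lambda>\<xi> \<eta>. cinner (V \<xi>) \<eta>"])
       (auto intro!: continuous_on_cinner continuous_on_bounded_clinear_op[OF assms(2)]
         continuous_on_bounded_clinear_op[OF assms(3)] continuous_on_fst continuous_on_snd
         continuous_on_id assms(4))
qed

lemma bounded_clinear_op_extension:
  fixes f :: "'h::chilbert_space \<Rightarrow> 'h"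
  assumes D: "csubspace D" "closure D = UNIV"
    and lin: "\<And>x y c d. x \<in> D \<Longrightarrow> y \<in> D \<Longrightarrow> f (c *\<^sub>C x + d *\<^sub>C y) = c *\<^sub>C f x + d *\<^sub>C f y"
    and bound: "\<And>x. x \<in> D \<Longrightarrow> norm (f x) \<le> K * norm x"
  obtains g where "bounded_clinear_op g" "\<And>x. x \<in> D \<Longrightarrow> g x = f x"
proof -
  have "(max K 0)-lipschitz_on D f"
  proof (rule lipschitz_onI)
    fix x y assume "x \<in> D" "y \<in> D"
    then have "f x - f y = f (x - y)"
      using lin[of x y 1 "-1"] by (simp add: scaleC_one scaleC_minus1_left)
    then have "dist (f x) (f y) \<le> K * dist x y"
      using bound[OF csubspace_diff[OF D(1) \<open>x \<in> D\<close> \<open>y \<in> D\<close>]] by (simp add: dist_norm)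
    then show "dist (f x) (f y) \<le> max K 0 * dist x y"
      by (meson max.cobounded1 mult_right_mono order_trans zero_le_dist)
  qed simp
  then obtain g where g: "(max K 0)-lipschitz_on UNIV g" "\<And>x. x \<in> D \<Longrightarrow> g x = f x"
    using lipschitz_extend_closure D(2) by metis
  have cont: "continuous_on UNIV g" by (rule lipschitz_on_continuous_on[OF g(1)])
  have "g (c *\<^sub>C x + d *\<^sub>C y) = c *\<^sub>C g x + d *\<^sub>C g y" for c d x y
  proof (rule eq_on_dense2[OF D(2), where f="\<lambda>x y. g (c *\<^sub>C x + d *\<^sub>C y)"])
    show "g (c *\<^sub>C x + d *\<^sub>C y) = c *\<^sub>C g x + d *\<^sub>C g y" if "x \<in> D" "y \<in> D" for x y
      using that D(1) lin g(2) unfolding csubspace_def by simp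
  qed (intro continuous_on_compose2[OF cont] continuous_intros; simp)+
  moreover have "norm (g x) \<le> K * norm x" for x
    by (rule le_on_dense[OF D(2)]) (auto intro!: continuous_intros cont simp: g(2) bound)
  ultimately have "bounded_clinear_op g" unfolding bounded_clinear_op_def clinear_on_def by blast
  then show ?thesis using that g(2) by blast
qed

section \<open>Commutants\<close>

lemma commutantI:
  "bounded_clinear_op C \<Longrightarrow> (\<And>T \<xi>. T \<in> N \<Longrightarrow> C (T \<xi>) = T (C \<xi>)) \<Longrightarrow> C \<in> commutant N"
  unfolding commutant_def by auto

lemma commutantD:
  assumes "C \<in> commutant N"
  shows "bounded_clinear_op C" "T \<in> N \<Longrightarrow> C (T \<xi>) = T (C \<xi>)"
  using assms unfolding commutant_def by (auto simp: fun_eq_iff)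

lemma commutant_antimono: "A \<subseteq> B \<Longrightarrow> commutant B \<subseteq> commutant A"
  unfolding commutant_def by blast

lemma subset_double_commutant: "(\<And>T. T \<in> A \<Longrightarrow> bounded_clinear_op T) \<Longrightarrow> A \<subseteq> commutant (commutant A)"
  unfolding commutant_def by auto

lemma triple_commutant:
  assumes "\<And>T. T \<in> N \<Longrightarrow> bounded_clinear_op T"
  shows "commutant (commutant (commutant N)) = commutant N"
proof
  show "commutant (commutant (commutant N)) \<subseteq> commutant N"
    by (rule commutant_antimono[OF subset_double_commutant[OF assms]])
  show "commutant N \<subseteq> commutant (commutant (commutant N))"
    by (rule subset_double_commutant) (rule commutantD(1))
qed

lemma adj_in_commutant:
  fixes N :: "('h::chilbert_space \<Rightarrow> 'h) set"
  assumes N: "\<And>T. T \<in> N \<Longrightarrow> bounded_clinear_op T" "\<And>T. T \<in> N \<Longrightarrow> adj T \<in> N"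
    and X: "X \<in> commutant N"
  shows "adj X \<in> commutant N"
proof (rule commutantI)
  have Xb: "bounded_clinear_op X" using commutantD(1)[OF X] .
  show "bounded_clinear_op (adj X)" using bounded_clinear_op_adj[OF Xb] .
  fix T \<eta> assume T: "T \<in> N"
  show "adj X (T \<eta>) = T (adj X \<eta>)"
  proof (rule cinner_ext_right)
    fix \<xi>
    have "cinner \<xi> (adj X (T \<eta>)) = cinner (adj T (X \<xi>)) \<eta>"
      by (simp add: cinner_adj_right[OF Xb, symmetric] cinner_adj_left[OF N(1)[OF T]])
    also have "\<dots> = cinner (X (adj T \<xi>)) \<eta>" using commutantD(2)[OF X N(2)[OF T]] by simp
    also have "\<dots> = cinner \<xi> (T (adj X \<eta>))"
      by (simp add: cinner_adj_right[OF Xb] cinner_adj_left[OF N(1)[OF T]])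
    finally show "cinner \<xi> (adj X (T \<eta>)) = cinner \<xi> (T (adj X \<eta>))" .
  qed
qed

lemma von_neumann_algebra_commutant:
  fixes N :: "('h::chilbert_space \<Rightarrow> 'h) set"
  assumes N: "\<And>T. T \<in> N \<Longrightarrow> bounded_clinear_op T" "\<And>T. T \<in> N \<Longrightarrow> adj T \<in> N"
  shows "von_neumann_algebra (commutant N)"
  unfolding von_neumann_algebra_def
proof (intro conjI ballI allI)
  show "id \<in> commutant N" by (simp add: commutantI bounded_clinear_op_id)
  fix X Y assume X: "X \<in> commutant N" and Y: "Y \<in> commutant N"
  show "bounded_clinear_op X" using commutantD(1)[OF X] .
  show "(\<lambda>\<xi>. X \<xi> + Y \<xi>) \<in> commutant N"
  proof (intro commutantI bounded_clinear_op_plus commutantD(1)[OF X] commutantD(1)[OF Y])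
    fix T \<xi> assume "T \<in> N"
    then show "X (T \<xi>) + Y (T \<xi>) = T (X \<xi> + Y \<xi>)"
      by (simp add: commutantD(2)[OF X] commutantD(2)[OF Y] bounded_clinear_op_add[OF N(1)])
  qed
  show "X \<circ> Y \<in> commutant N"
  proof (intro commutantI bounded_clinear_op_comp commutantD(1)[OF X] commutantD(1)[OF Y])
    fix T \<xi> assume "T \<in> N"
    then show "(X \<circ> Y) (T \<xi>) = T ((X \<circ> Y) \<xi>)"
      by (simp add: commutantD(2)[OF X] commutantD(2)[OF Y])
  qed
  show "adj X \<in> commutant N" by (rule adj_in_commutant[OF N X])
  show "(\<lambda>\<xi>. c *\<^sub>C X \<xi>) \<in> commutant N" for c
  proof (intro commutantI bounded_clinear_op_scaleC_left commutantD(1)[OF X])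
    fix T \<xi> assume "T \<in> N"
    then show "c *\<^sub>C X (T \<xi>) = T (c *\<^sub>C X \<xi>)"
      by (simp add: commutantD(2)[OF X] bounded_clinear_op_scaleC[OF N(1)])
  qed
qed (rule triple_commutant[OF N(1)])

lemma orth_proj_in_commutant:
  fixes N :: "('h::chilbert_space \<Rightarrow> 'h) set"
  assumes N: "\<And>T. T \<in> N \<Longrightarrow> bounded_clinear_op T" "\<And>T. T \<in> N \<Longrightarrow> adj T \<in> N"
    and K: "csubspace K" "closed K"
    and invariant: "\<And>T k. T \<in> N \<Longrightarrow> k \<in> K \<Longrightarrow> T k \<in> K"
  shows "orth_proj K \<in> commutant N"
proof (rule commutantI[OF bounded_clinear_op_orth_proj[OF K]])
  fix T \<xi> assume T: "T \<in> N"
  let ?P = "orth_proj K"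
  show "?P (T \<xi>) = T (?P \<xi>)"
  proof (rule orth_proj_eqI[OF K])
    show "T (?P \<xi>) \<in> K" by (rule invariant[OF T orth_proj_in(1)[OF K]])
    show "\<forall>y\<in>K. cinner (T \<xi> - T (?P \<xi>)) y = 0"
      using orth_proj_in(2)[OF K, of \<xi>] invariant[OF N(2)[OF T]]
      by (simp add: bounded_clinear_op_diff[OF N(1)[OF T], symmetric] cinner_adj_right[OF N(1)[OF T]])
  qed
qed

lemma seminorm_c_zero: "seminorm_c q \<Longrightarrow> q 0 = 0"
  unfolding seminorm_c_def by (metis norm_zero mult_zero_left cvs.scale_zero_left)

lemma seminorm_c_minus: "seminorm_c q \<Longrightarrow> q (- x) = q x"
  unfolding seminorm_c_def by (metis norm_minus_cancel norm_one mult_1 scaleC_minus1_left)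

lemma seminorm_c_nonneg: "seminorm_c q \<Longrightarrow> q x \<ge> 0"
  using seminorm_c_zero[of q] seminorm_c_minus[of q x] unfolding seminorm_c_def
  by (metis add.right_inverse mult_2 zero_le_double_add_iff_zero_le_single_add)

lemma lc_continuous_comp:
  assumes F: "lc_continuous S F" and G: "lc_continuous S G"
  shows "lc_continuous S (\<lambda>x. F (G x))"
  unfolding lc_continuous_def
proof (intro allI ballI impI)
  fix x p and \<epsilon> :: real assume "p \<in> S" "\<epsilon> > 0"
  then obtain q \<delta> where q: "q \<in> S" "\<delta> > 0" "\<And>y. q (y - G x) < \<delta> \<Longrightarrow> p (F y - F (G x)) < \<epsilon>"
    using F unfolding lc_continuous_def by blast
  obtain r \<delta>' where "r \<in> S" "\<delta>' > 0" "\<And>y. r (y - x) < \<delta>' \<Longrightarrow> q (G y - G x) < \<delta>"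
    using G q(1,2) unfolding lc_continuous_def by blast
  with q show "\<exists>q\<in>S. \<exists>\<delta>>0. \<forall>y. q (y - x) < \<delta> \<longrightarrow> p (F (G y) - F (G x)) < \<epsilon>" by blast
qed

lemma lc_continuous_fun_comp:
  assumes F: "lc_continuous_fun S F" and G: "lc_continuous S G"
  shows "lc_continuous_fun S (\<lambda>x. F (G x))"
  unfolding lc_continuous_fun_def
proof (intro allI impI)
  fix x and \<epsilon> :: real assume "\<epsilon> > 0"
  then obtain q \<delta> where q: "q \<in> S" "\<delta> > 0" "\<And>y. q (y - G x) < \<delta> \<Longrightarrow> dist (F y) (F (G x)) < \<epsilon>"
    using F unfolding lc_continuous_fun_def by blast
  obtain r \<delta>' where "r \<in> S" "\<delta>' > 0" "\<And>y. r (y - x) < \<delta>' \<Longrightarrow> q (G y - G x) < \<delta>"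
    using G q(1,2) unfolding lc_continuous_def by blast
  with q show "\<exists>q\<in>S. \<exists>\<delta>>0. \<forall>y. q (y - x) < \<delta> \<longrightarrow> dist (F (G y)) (F (G x)) < \<epsilon>" by blast
qed

lemma isCont_lc_continuous_fun_comp:
  assumes f: "lc_continuous_fun S f" and \<phi>: "\<And>z. isCont \<phi> z"
  shows "lc_continuous_fun S (\<lambda>x. \<phi> (f x))"
  unfolding lc_continuous_fun_def
proof (intro allI impI)
  fix x and \<epsilon> :: real assume "\<epsilon> > 0"
  then obtain d where d: "d > 0" "\<And>u. dist u (f x) < d \<Longrightarrow> dist (\<phi> u) (\<phi> (f x)) < \<epsilon>"
    using \<phi>[of "f x"] unfolding continuous_at_eps_delta by blast
  obtain q \<delta> where "q \<in> S" "\<delta> > 0" "\<And>y. q (y - x) < \<delta> \<Longrightarrow> dist (f y) (f x) < d"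
    using f d(1) unfolding lc_continuous_fun_def by blast
  with d(2) show "\<exists>q\<in>S. \<exists>\<delta>>0. \<forall>y. q (y - x) < \<delta> \<longrightarrow> dist (\<phi> (f y)) (\<phi> (f x)) < \<epsilon>"
    by blast
qed

lemma lc_continuous_fun_diff:
  fixes f g :: "'a::complex_vector \<Rightarrow> 'b::real_normed_vector"
  assumes directed: "\<forall>p\<in>S. \<forall>q\<in>S. \<exists>r\<in>S. \<forall>x. max (p x) (q x) \<le> r x"
    and f: "lc_continuous_fun S f" and g: "lc_continuous_fun S g"
  shows "lc_continuous_fun S (\<lambda>x. f x - g x)"
  unfolding lc_continuous_fun_def
proof (intro allI impI)
  fix x and \<epsilon> :: real assume "\<epsilon> > 0"
  then obtain q1 \<delta>1 where 1: "q1 \<in> S" "\<delta>1 > 0" "\<And>y. q1 (y - x) < \<delta>1 \<Longrightarrow> dist (f y) (f x) < \<epsilon>/2"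
    using f unfolding lc_continuous_fun_def by (meson half_gt_zero)
  obtain q2 \<delta>2 where 2: "q2 \<in> S" "\<delta>2 > 0" "\<And>y. q2 (y - x) < \<delta>2 \<Longrightarrow> dist (g y) (g x) < \<epsilon>/2"
    using g \<open>\<epsilon> > 0\<close> unfolding lc_continuous_fun_def by (meson half_gt_zero)
  obtain r where r: "r \<in> S" "\<And>z. max (q1 z) (q2 z) \<le> r z" using directed 1(1) 2(1) by blast
  have "dist (f y - g y) (f x - g x) < \<epsilon>" if "r (y - x) < min \<delta>1 \<delta>2" for y
  proof -
    have "dist (f y) (f x) < \<epsilon>/2" "dist (g y) (g x) < \<epsilon>/2"
      using 1(3) 2(3) r(2)[of "y - x"] that by force+
    moreover have "(f y - g y) - (f x - g x) = (f y - f x) - (g y - g x)"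
      by (simp add: algebra_simps)
    then have "dist (f y - g y) (f x - g x) \<le> dist (f y) (f x) + dist (g y) (g x)"
      unfolding dist_norm by (metis norm_triangle_ineq4)
    ultimately show ?thesis by simp
  qed
  moreover have "min \<delta>1 \<delta>2 > 0" using 1 2 by simp
  ultimately show "\<exists>q\<in>S. \<exists>\<delta>>0. \<forall>y. q (y - x) < \<delta> \<longrightarrow> dist (f y - g y) (f x - g x) < \<epsilon>"
    using r(1) by blast
qed

lemma lc_continuous_fun_dense_le0:
  fixes f :: "'a::complex_vector \<Rightarrow> real"
  assumes dense: "\<forall>a. \<forall>p\<in>S. \<forall>\<epsilon>>0. \<exists>x\<in>A0. p (a - x) < \<epsilon>"
    and seminorms: "\<forall>p\<in>S. seminorm_c p"
    and f: "lc_continuous_fun S f" and le0: "\<And>x. x \<in> A0 \<Longrightarrow> f x \<le> 0"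
  shows "f w \<le> 0"
proof (rule ccontr)
  assume "\<not> f w \<le> 0"
  then obtain q \<delta> where q: "q \<in> S" "\<delta> > 0" "\<And>y. q (y - w) < \<delta> \<Longrightarrow> dist (f y) (f w) < f w"
    using f unfolding lc_continuous_fun_def by (meson not_le)
  obtain x where "x \<in> A0" "q (w - x) < \<delta>" using dense q(1,2) by blast
  moreover have "q (x - w) = q (w - x)"
    using seminorm_c_minus[of q "w - x"] seminorms q(1) by simp
  ultimately show False using q(3)[of x] le0[of x] by (simp add: dist_real_def)
qed

lemma lc_continuous_fun_dense_eq0:
  fixes f :: "'a::complex_vector \<Rightarrow> 'b::real_normed_vector"
  assumes dense: "\<forall>a. \<forall>p\<in>S. \<forall>\<epsilon>>0. \<exists>x\<in>A0. p (a - x) < \<epsilon>"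
    and seminorms: "\<forall>p\<in>S. seminorm_c p"
    and f: "lc_continuous_fun S f" and eq0: "\<And>x. x \<in> A0 \<Longrightarrow> f x = 0"
  shows "f w = 0"
proof -
  have "lc_continuous_fun S (\<lambda>x. norm (f x))"
    by (rule isCont_lc_continuous_fun_comp[OF f]) (intro continuous_intros)
  then have "norm (f w) \<le> 0"
    by (rule lc_continuous_fun_dense_le0[OF dense seminorms]) (simp add: eq0)
  then show ?thesis by simp
qed

section \<open>The GNS representation of a locally convex quasi *-algebra\<close>

locale bounded_gns =
  fixes A0 :: "'a::complex_vector set" and mul :: "'a \<Rightarrow> 'a \<Rightarrow> 'a" and star :: "'a \<Rightarrow> 'a"
    and S :: "('a \<Rightarrow> real) set" and e :: 'a and \<omega>0 \<omega> :: "'a \<Rightarrow> complex" and p :: "'a \<Rightarrow> real"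
    and lam :: "'a \<Rightarrow> 'h::chilbert_space"
  assumes lcqsa: "lcqsa A0 mul star S e"
    and p_seminorm: "seminorm_c p" and p_continuous: "lc_continuous_fun S p"
    and \<omega>0_bound: "\<forall>a\<in>A0. Re (\<omega>0 (mul (star a) a)) \<le> (p a)\<^sup>2"
    and \<omega>_extends: "\<forall>x\<in>A0. \<omega> x = \<omega>0 x" and \<omega>_continuous: "lc_continuous_fun S \<omega>"
    and gns: "gns A0 mul star \<omega> lam"
    and pi_bounded: "\<forall>x\<in>A0. \<exists>K. \<forall>a\<in>A0. norm (lam (mul x a)) \<le> K * norm (lam a)"
begin

lemma seminorms: "\<forall>q\<in>S. seminorm_c q"
  using lcqsa unfolding lcqsa_def by (elim conjE) assumption

lemma directed: "\<forall>p\<in>S. \<forall>q\<in>S. \<exists>r\<in>S. \<forall>x. max (p x) (q x) \<le> r x"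
  using lcqsa unfolding lcqsa_def by (elim conjE) assumption

lemma A0_dense: "\<forall>a. \<forall>p\<in>S. \<forall>\<epsilon>>0. \<exists>x\<in>A0. p (a - x) < \<epsilon>"
  using lcqsa unfolding lcqsa_def by (elim conjE) assumption

lemma zero_in_A0: "0 \<in> A0"
  using lcqsa unfolding lcqsa_def by (elim conjE) assumption

lemma A0_lincomb: "x \<in> A0 \<Longrightarrow> y \<in> A0 \<Longrightarrow> c *\<^sub>C x + d *\<^sub>C y \<in> A0"
proof -
  assume "x \<in> A0" "y \<in> A0"
  moreover have "\<forall>x\<in>A0. \<forall>y\<in>A0. \<forall>c. x + y \<in> A0 \<and> c *\<^sub>C x \<in> A0"
    using lcqsa unfolding lcqsa_def by blast
  ultimately show ?thesis by blast
qed

lemma A0_diff: "x \<in> A0 \<Longrightarrow> y \<in> A0 \<Longrightarrow> x - y \<in> A0"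
  using A0_lincomb[of x y 1 "-1"] by (simp add: scaleC_one scaleC_minus1_left)

lemma A0_mul: "x \<in> A0 \<Longrightarrow> y \<in> A0 \<Longrightarrow> mul x y \<in> A0"
  using lcqsa unfolding lcqsa_def by blast

lemma A0_star: "x \<in> A0 \<Longrightarrow> star x \<in> A0"
  using lcqsa unfolding lcqsa_def by blast

lemma mul_assoc: "x \<in> A0 \<Longrightarrow> y \<in> A0 \<Longrightarrow> z \<in> A0 \<Longrightarrow> mul (mul x y) z = mul x (mul y z)"
  using lcqsa unfolding lcqsa_def by blast

lemma star_mul: "x \<in> A0 \<Longrightarrow> y \<in> A0 \<Longrightarrow> star (mul x y) = mul (star y) (star x)"
  using lcqsa unfolding lcqsa_def by blast

lemma star_star [simp]: "star (star x) = x"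
  using lcqsa unfolding lcqsa_def by blast

lemma star_continuous: "lc_continuous S star"
  using lcqsa unfolding lcqsa_def by (elim conjE) assumption

lemma mul_left_clinear: "x \<in> A0 \<Longrightarrow> clinear_on UNIV (\<lambda>a. mul x a)"
  using lcqsa unfolding lcqsa_def by blast

lemma mul_right_clinear: "x \<in> A0 \<Longrightarrow> clinear_on UNIV (\<lambda>a. mul a x)"
  using lcqsa unfolding lcqsa_def by blast

lemma mul_right_continuous: "x \<in> A0 \<Longrightarrow> lc_continuous S (\<lambda>a. mul a x)"
  using lcqsa unfolding lcqsa_def by blast

lemma lam_clinear: "clinear_on UNIV lam"
  using gns unfolding gns_def by blast

lemma lam_dense: "closure (lam ` A0) = UNIV"
  using gns unfolding gns_def by blast

lemma cinner_lam: "x \<in> A0 \<Longrightarrow> cinner (lam x) (lam a) = \<omega> (mul (star a) x)"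
  using gns unfolding gns_def by blast

lemma lam_A0_csubspace: "csubspace (lam ` A0)"
  unfolding csubspace_def
proof (intro conjI ballI allI)
  show "0 \<in> lam ` A0" using zero_in_A0 clinear_on_zero[OF lam_clinear] by force
  fix u v c assume "u \<in> lam ` A0" "v \<in> lam ` A0"
  then obtain a b where "a \<in> A0" "b \<in> A0" "u = lam a" "v = lam b" by blast
  then show "u + v \<in> lam ` A0" "c *\<^sub>C u \<in> lam ` A0"
    using A0_lincomb[of a b 1 1] A0_lincomb[of a a c 0]
    by (auto simp: scaleC_one clinear_on_add[OF lam_clinear, symmetric]
        clinear_on_scaleC[OF lam_clinear, symmetric])
qed

lemma norm_lam_le_p_A0:
  assumes "y \<in> A0"
  shows "norm (lam y) \<le> p y"
proof -
  have "(norm (lam y))\<^sup>2 = Re (\<omega>0 (mul (star y) y))"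
    using assms by (simp add: power2_norm_eq_cinner cinner_lam \<omega>_extends A0_mul A0_star)
  also have "\<dots> \<le> (p y)\<^sup>2" using \<omega>0_bound assms by blast
  finally show ?thesis by (rule power2_le_imp_le[OF _ seminorm_c_nonneg[OF p_seminorm]])
qed

lemma cmod_cinner_lam_le:
  assumes x: "x \<in> A0"
  shows "cmod (cinner (lam x) (lam w)) \<le> norm (lam x) * p w"
proof -
  define g where "g u = cmod (\<omega> (mul (star u) x)) - norm (lam x) * p u" for u
  have "lc_continuous_fun S (\<lambda>u. \<omega> (mul (star u) x))"
    by (rule lc_continuous_fun_comp[OF \<omega>_continuous
          lc_continuous_comp[OF mul_right_continuous[OF x] star_continuous]])
  then have "lc_continuous_fun S (\<lambda>u. cmod (\<omega> (mul (star u) x)))"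
    by (rule isCont_lc_continuous_fun_comp) (intro continuous_intros)
  moreover have "lc_continuous_fun S (\<lambda>u. norm (lam x) * p u)"
    by (rule isCont_lc_continuous_fun_comp[OF p_continuous]) (intro continuous_intros)
  ultimately have "lc_continuous_fun S g"
    unfolding g_def by (rule lc_continuous_fun_diff[OF directed])
  moreover have "g u \<le> 0" if u: "u \<in> A0" for u
  proof -
    have "cmod (\<omega> (mul (star u) x)) \<le> norm (lam x) * norm (lam u)"
      using cinner_cauchy_schwarz[of "lam x" "lam u"] cinner_lam[OF x] by simp
    also have "\<dots> \<le> norm (lam x) * p u" by (simp add: mult_left_mono norm_lam_le_p_A0[OF u])
    finally show ?thesis unfolding g_def by simp
  qed
  ultimately have "g w \<le> 0" by (rule lc_continuous_fun_dense_le0[OF A0_dense seminorms])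
  then show ?thesis unfolding g_def cinner_lam[OF x] by simp
qed

lemma norm_lam_le_p: "norm (lam w) \<le> p w"
proof -
  have bound: "cmod (cinner \<xi> (lam w)) \<le> p w * norm \<xi>" for \<xi>
  proof (rule le_on_dense[OF lam_dense, where f="\<lambda>\<xi>. cmod (cinner \<xi> (lam w))"])
    show "cmod (cinner \<xi> (lam w)) \<le> p w * norm \<xi>" if "\<xi> \<in> lam ` A0" for \<xi>
      using that cmod_cinner_lam_le by (auto simp: mult.commute)
  qed (intro continuous_intros)+
  have "(norm (lam w))\<^sup>2 \<le> p w * norm (lam w)"
    using bound[of "lam w"] by (simp add: cinner_self_eq_norm norm_power)
  then show ?thesis
    using seminorm_c_nonneg[OF p_seminorm, of w]
    by (cases "norm (lam w) = 0") (auto simp: power2_eq_square)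
qed

lemma lc_continuous_fun_lam:
  assumes F: "lc_continuous S F"
  shows "lc_continuous_fun S (\<lambda>x. lam (F x))"
  unfolding lc_continuous_fun_def
proof (intro allI impI)
  fix x and \<epsilon> :: real assume "\<epsilon> > 0"
  then obtain q \<delta> where q: "q \<in> S" "\<delta> > 0" "\<And>y. q (y - 0) < \<delta> \<Longrightarrow> dist (p y) (p 0) < \<epsilon>"
    using p_continuous unfolding lc_continuous_fun_def by blast
  obtain r \<delta>' where r: "r \<in> S" "\<delta>' > 0" "\<And>y. r (y - x) < \<delta>' \<Longrightarrow> q (F y - F x) < \<delta>"
    using F q(1,2) unfolding lc_continuous_def by blast
  have "dist (lam (F y)) (lam (F x)) < \<epsilon>" if "r (y - x) < \<delta>'" for y
  proof -
    have "dist (lam (F y)) (lam (F x)) \<le> p (F y - F x)"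
      using norm_lam_le_p[of "F y - F x"] by (simp add: dist_norm clinear_on_diff[OF lam_clinear])
    also have "\<dots> < \<epsilon>"
      using q(3)[of "F y - F x"] r(3)[OF that] seminorm_c_zero[OF p_seminorm]
        seminorm_c_nonneg[OF p_seminorm, of "F y - F x"]
      by (simp add: dist_real_def)
    finally show ?thesis .
  qed
  with r(1,2) show "\<exists>q\<in>S. \<exists>\<delta>>0. \<forall>y. q (y - x) < \<delta> \<longrightarrow> dist (lam (F y)) (lam (F x)) < \<epsilon>"
    by blast
qed

text \<open>The bounded extension of \<pi>_\<omega>(x) to H_\<omega>; it is only meaningful for x \<in> A0.\<close>

definition pi_op :: "'a \<Rightarrow> 'h \<Rightarrow> 'h" where
  "pi_op x = (SOME T. bounded_clinear_op T \<and> (\<forall>a\<in>A0. T (lam a) = lam (mul x a)))"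

lemma pi_op_exists:
  assumes x: "x \<in> A0"
  shows "\<exists>T. bounded_clinear_op T \<and> (\<forall>a\<in>A0. T (lam a) = lam (mul x a))"
proof -
  obtain K where K: "\<And>a. a \<in> A0 \<Longrightarrow> norm (lam (mul x a)) \<le> K * norm (lam a)"
    using pi_bounded x by blast
  have lam_diff: "lam (u - v) = lam u - lam v" for u v
    by (rule clinear_on_diff[OF lam_clinear])
  have well_defined: "lam (mul x a) = lam (mul x a')"
    if "a \<in> A0" "a' \<in> A0" "lam a = lam a'" for a a'
    using K[OF A0_diff[OF that(1,2)]] that(3)
    by (simp add: lam_diff clinear_on_diff[OF mul_left_clinear[OF x]])
  define f where "f \<eta> = lam (mul x (SOME a. a \<in> A0 \<and> lam a = \<eta>))" for \<eta>
  have f_lam: "f (lam a) = lam (mul x a)" if "a \<in> A0" for a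
  proof -
    have "(SOME a'. a' \<in> A0 \<and> lam a' = lam a) \<in> A0 \<and> lam (SOME a'. a' \<in> A0 \<and> lam a' = lam a) = lam a"
      by (rule someI[of _ a]) (simp add: that)
    then show ?thesis unfolding f_def using well_defined that by metis
  qed
  have "f (c *\<^sub>C \<xi> + d *\<^sub>C \<eta>) = c *\<^sub>C f \<xi> + d *\<^sub>C f \<eta>"
    if in_D: "\<xi> \<in> lam ` A0" "\<eta> \<in> lam ` A0" for \<xi> \<eta> c d
  proof -
    obtain a b where ab: "a \<in> A0" "b \<in> A0" "\<xi> = lam a" "\<eta> = lam b" using in_D by blast
    have "f (c *\<^sub>C \<xi> + d *\<^sub>C \<eta>) = f (lam (c *\<^sub>C a + d *\<^sub>C b))"
      by (simp only: ab clinear_onD[OF lam_clinear])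
    also have "\<dots> = lam (mul x (c *\<^sub>C a + d *\<^sub>C b))" by (rule f_lam[OF A0_lincomb[OF ab(1,2)]])
    also have "\<dots> = c *\<^sub>C f \<xi> + d *\<^sub>C f \<eta>"
      by (simp only: clinear_onD[OF mul_left_clinear[OF x]] clinear_onD[OF lam_clinear] ab
          f_lam[OF ab(1)] f_lam[OF ab(2)])
    finally show ?thesis .
  qed
  moreover have "norm (f \<xi>) \<le> K * norm \<xi>" if "\<xi> \<in> lam ` A0" for \<xi>
    using that K by (auto simp: f_lam)
  ultimately obtain g where "bounded_clinear_op g" "\<And>\<xi>. \<xi> \<in> lam ` A0 \<Longrightarrow> g \<xi> = f \<xi>"
    using bounded_clinear_op_extension[OF lam_A0_csubspace lam_dense] by metis
  then show ?thesis using f_lam by auto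
qed

lemma
  assumes "x \<in> A0"
  shows bounded_clinear_op_pi_op: "bounded_clinear_op (pi_op x)"
    and pi_op_lam: "a \<in> A0 \<Longrightarrow> pi_op x (lam a) = lam (mul x a)"
  using someI_ex[OF pi_op_exists[OF assms]] unfolding pi_op_def[symmetric] by blast+

lemma cinner_pi_op:
  assumes x: "x \<in> A0"
  shows "cinner (pi_op x \<xi>) \<eta> = cinner \<xi> (pi_op (star x) \<eta>)"
proof (rule eq_on_dense2[OF lam_dense, where f="\<lambda>\<xi> \<eta>. cinner (pi_op x \<xi>) \<eta>"
      and g="\<lambda>\<xi> \<eta>. cinner \<xi> (pi_op (star x) \<eta>)"])
  show "continuous_on UNIV (\<lambda>z. cinner (pi_op x (fst z)) (snd z))"
    by (intro continuous_on_cinner continuous_on_bounded_clinear_op[OF bounded_clinear_op_pi_op[OF x]]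
        continuous_on_fst continuous_on_snd continuous_on_id)
  show "continuous_on UNIV (\<lambda>z. cinner (fst z) (pi_op (star x) (snd z)))"
    by (intro continuous_on_cinner continuous_on_bounded_clinear_op[OF bounded_clinear_op_pi_op]
        A0_star x continuous_on_fst continuous_on_snd continuous_on_id)
  fix \<xi> \<eta> assume "\<xi> \<in> lam ` A0" "\<eta> \<in> lam ` A0"
  then obtain a c where a: "a \<in> A0" "\<xi> = lam a" and c: "c \<in> A0" "\<eta> = lam c" by blast
  have "cinner (pi_op x (lam a)) (lam c) = \<omega> (mul (star c) (mul x a))"
    by (simp add: pi_op_lam[OF x a(1)] cinner_lam A0_mul x a(1))
  also have "\<dots> = \<omega> (mul (star (mul (star x) c)) a)"
    by (simp add: mul_assoc A0_star star_mul x a(1) c(1))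
  also have "\<dots> = cinner (lam a) (pi_op (star x) (lam c))"
    by (simp add: pi_op_lam A0_star x c(1) cinner_lam[OF a(1)])
  finally show "cinner (pi_op x \<xi>) \<eta> = cinner \<xi> (pi_op (star x) \<eta>)" unfolding a c .
qed

lemma adj_pi_op: "x \<in> A0 \<Longrightarrow> adj (pi_op x) = pi_op (star x)"
  by (rule adj_eqI[OF bounded_clinear_op_pi_op cinner_pi_op])

lemma pi_ops_bounded: "T \<in> pi_op ` A0 \<Longrightarrow> bounded_clinear_op T"
  using bounded_clinear_op_pi_op by blast

lemma pi_ops_adj_closed: "T \<in> pi_op ` A0 \<Longrightarrow> adj T \<in> pi_op ` A0"
  using adj_pi_op A0_star by blast

lemma weak_commutant_subset_commutant:
  "weak_commutant_pi A0 mul star lam \<subseteq> commutant (pi_op ` A0)"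
proof
  fix C assume "C \<in> weak_commutant_pi A0 mul star lam"
  then have C: "bounded_clinear_op C"
    and weak: "\<And>x a c. a \<in> A0 \<Longrightarrow> c \<in> A0 \<Longrightarrow>
       cinner (lam (mul x a)) (adj C (lam c)) = cinner (C (lam a)) (lam (mul (star x) c))"
    unfolding weak_commutant_pi_def by blast+
  show "C \<in> commutant (pi_op ` A0)"
  proof (rule commutantI[OF C])
    fix T \<xi> assume "T \<in> pi_op ` A0"
    then obtain x where x: "x \<in> A0" "T = pi_op x" by blast
    note pi = bounded_clinear_op_pi_op[OF x(1)]
    have "C \<circ> pi_op x = pi_op x \<circ> C"
    proof (rule bounded_clinear_op_eqI_dense[OF lam_dense bounded_clinear_op_comp[OF C pi]
          bounded_clinear_op_comp[OF pi C]])
      fix \<xi> \<eta> assume "\<xi> \<in> lam ` A0" "\<eta> \<in> lam ` A0"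
      then obtain a c where a: "a \<in> A0" "\<xi> = lam a" and c: "c \<in> A0" "\<eta> = lam c" by blast
      have "cinner (C (pi_op x (lam a))) (lam c) = cinner (lam (mul x a)) (adj C (lam c))"
        by (simp add: cinner_adj_right[OF C] pi_op_lam[OF x(1) a(1)])
      also have "\<dots> = cinner (C (lam a)) (lam (mul (star x) c))" by (rule weak[OF a(1) c(1)])
      also have "\<dots> = cinner (pi_op x (C (lam a))) (lam c)"
        by (simp add: cinner_pi_op[OF x(1)] pi_op_lam A0_star x(1) c(1))
      finally show "cinner ((C \<circ> pi_op x) \<xi>) \<eta> = cinner ((pi_op x \<circ> C) \<xi>) \<eta>"
        unfolding a c by simp
    qed
    then show "C (T \<xi>) = T (C \<xi>)" using x(2) by (metis comp_apply)
  qed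
qed

text \<open>For x outside A0 the defining identity of the weak commutant is reached from A0 by
  continuity in x; this is where the bound of lam by the continuous seminorm p is needed.\<close>

lemma commutant_subset_weak_commutant:
  "commutant (pi_op ` A0) \<subseteq> weak_commutant_pi A0 mul star lam"
proof
  fix C assume C_comm: "C \<in> commutant (pi_op ` A0)"
  note C = commutantD(1)[OF C_comm]
  have "cinner (lam (mul x a)) (adj C (lam c)) = cinner (C (lam a)) (lam (mul (star x) c))"
    if a: "a \<in> A0" and c: "c \<in> A0" for x a c
  proof -
    define h where "h x = cinner (lam (mul x a)) (adj C (lam c))
                          - cinner (C (lam a)) (lam (mul (star x) c))" for x
    have "lc_continuous_fun S h"
      unfolding h_def
    proof (intro lc_continuous_fun_diff[OF directed])
      show "lc_continuous_fun S (\<lambda>x. cinner (lam (mul x a)) (adj C (lam c)))"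
        by (rule isCont_lc_continuous_fun_comp[OF lc_continuous_fun_lam[OF mul_right_continuous[OF a]]])
           (intro continuous_intros)
      show "lc_continuous_fun S (\<lambda>x. cinner (C (lam a)) (lam (mul (star x) c)))"
        by (rule isCont_lc_continuous_fun_comp[OF lc_continuous_fun_lam[OF
              lc_continuous_comp[OF mul_right_continuous[OF c] star_continuous]]])
           (intro continuous_intros)
    qed
    moreover have "h y = 0" if y: "y \<in> A0" for y
    proof -
      have "cinner (lam (mul y a)) (adj C (lam c)) = cinner (C (pi_op y (lam a))) (lam c)"
        by (simp add: cinner_adj_right[OF C] pi_op_lam[OF y a])
      also have "\<dots> = cinner (pi_op y (C (lam a))) (lam c)"
        using commutantD(2)[OF C_comm] y by simp
      also have "\<dots> = cinner (C (lam a)) (lam (mul (star y) c))"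
        by (simp add: cinner_pi_op[OF y] pi_op_lam A0_star y c)
      finally show ?thesis unfolding h_def by simp
    qed
    ultimately have "h x = 0" by (rule lc_continuous_fun_dense_eq0[OF A0_dense seminorms])
    then show ?thesis unfolding h_def by simp
  qed
  then show "C \<in> weak_commutant_pi A0 mul star lam"
    unfolding weak_commutant_pi_def using C by blast
qed

lemma weak_commutant_eq_commutant: "weak_commutant_pi A0 mul star lam = commutant (pi_op ` A0)"
  using weak_commutant_subset_commutant commutant_subset_weak_commutant by blast

lemma cyclic_subspace_invariant:
  assumes b: "b \<in> A0" and x: "x \<in> A0"
    and \<xi>: "\<xi> \<in> closure ((\<lambda>y. lam (mul y b)) ` A0)"
  shows "pi_op x \<xi> \<in> closure ((\<lambda>y. lam (mul y b)) ` A0)"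
proof -
  let ?V = "(\<lambda>y. lam (mul y b)) ` A0"
  have "pi_op x ` ?V \<subseteq> ?V"
  proof
    fix u assume "u \<in> pi_op x ` ?V"
    then obtain y where y: "y \<in> A0" "u = pi_op x (lam (mul y b))" by blast
    then have "u = lam (mul (mul x y) b)"
      by (simp add: pi_op_lam[OF x] A0_mul b mul_assoc x)
    then show "u \<in> ?V" using A0_mul[OF x y(1)] by blast
  qed
  then have image: "pi_op x ` ?V \<subseteq> closure ?V" using closure_subset by blast
  have cont: "continuous_on (closure ?V) (pi_op x)"
    using continuous_on_bounded_clinear_op[OF bounded_clinear_op_pi_op[OF x] continuous_on_id]
    by simp
  have "pi_op x ` closure ?V \<subseteq> closure ?V"
    by (rule image_closure_subset[OF cont closed_closure image])
  then show ?thesis using \<xi> by blast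
qed

lemma cyclic_csubspace: "b \<in> A0 \<Longrightarrow> csubspace ((\<lambda>y. lam (mul y b)) ` A0)"
  unfolding csubspace_def
proof (intro conjI ballI allI)
  assume b: "b \<in> A0"
  let ?f = "\<lambda>y. lam (mul y b)"
  have f_lin: "?f (c *\<^sub>C y + d *\<^sub>C y') = c *\<^sub>C ?f y + d *\<^sub>C ?f y'" for c d y y'
    by (simp only: clinear_onD[OF mul_right_clinear[OF b]] clinear_onD[OF lam_clinear])
  show "0 \<in> ?f ` A0"
    using f_lin[of 0 0 0 0] zero_in_A0 by force
  fix u v c assume "u \<in> ?f ` A0" "v \<in> ?f ` A0"
  then obtain y y' where "y \<in> A0" "y' \<in> A0" "u = ?f y" "v = ?f y'" by blast
  then show "u + v \<in> ?f ` A0" "c *\<^sub>C u \<in> ?f ` A0"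
    using f_lin[of 1 y 1 y'] f_lin[of c y 0 y] A0_lincomb[of y y' 1 1] A0_lincomb[of y y c 0]
    by (force simp: scaleC_one)+
qed

lemma von_neumann_algebra_weak_commutant: "von_neumann_algebra (weak_commutant_pi A0 mul star lam)"
  unfolding weak_commutant_eq_commutant
  by (rule von_neumann_algebra_commutant[OF pi_ops_bounded pi_ops_adj_closed])

lemma orth_proj_cyclic_in_weak_commutant:
  assumes "b \<in> A0"
  shows "orth_proj (closure ((\<lambda>x. lam (mul x b)) ` A0)) \<in> weak_commutant_pi A0 mul star lam"
  unfolding weak_commutant_eq_commutant
  using pi_ops_bounded pi_ops_adj_closed csubspace_closure[OF cyclic_csubspace[OF assms]]
    cyclic_subspace_invariant[OF assms]
  by (intro orth_proj_in_commutant) auto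

end

theorem lemma11:
  fixes A0 :: "'a::complex_vector set"
    and mul :: "'a \<Rightarrow> 'a \<Rightarrow> 'a" and star :: "'a \<Rightarrow> 'a"
    and S :: "('a \<Rightarrow> real) set" and e :: 'a
    and \<omega>0 \<omega> :: "'a \<Rightarrow> complex" and p :: "'a \<Rightarrow> real"
    and lam :: "'a \<Rightarrow> 'h::chilbert_space" and b :: 'a
  assumes "lcqsa A0 mul star S e"
    and "clinear_on A0 \<omega>0"
    and "\<forall>a\<in>A0. Im (\<omega>0 (mul (star a) a)) = 0 \<and> 0 \<le> Re (\<omega>0 (mul (star a) a))"
    and "seminorm_c p" and "lc_continuous_fun S p"
    and "\<forall>a\<in>A0. Re (\<omega>0 (mul (star a) a)) \<le> (p a)\<^sup>2"
    and "\<forall>x\<in>A0. \<omega> x = \<omega>0 x" and "lc_continuous_fun S \<omega>"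
    and "gns A0 mul star \<omega> lam"
    and "\<forall>x\<in>A0. \<exists>K. \<forall>a\<in>A0. norm (lam (mul x a)) \<le> K * norm (lam a)"
    and "b \<in> A0"
  shows "von_neumann_algebra (weak_commutant_pi A0 mul star lam) \<and>
         orth_proj (closure ((\<lambda>x. lam (mul x b)) ` A0)) \<in> weak_commutant_pi A0 mul star lam"
proof -
  interpret bounded_gns A0 mul star S e \<omega>0 \<omega> p lam
    using assms by unfold_locales auto
  show ?thesis
    using von_neumann_algebra_weak_commutant orth_proj_cyclic_in_weak_commutant[OF \<open>b \<in> A0\<close>]
    by blast
qed

end
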